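(* Let $n\ge 3$ and let $A=(a_{ij})\in\mathbb{R}^{n\times n}$ be symmetric (indefinite), and suppose $PAP^T=LTL^T$ where $P$ is a permutation matrix, $L=(l_{ij})$ is unit lower triangular with first column $e_1$ and $|l_{ij}|\le 1$ for all $i,j$, and $T=(t_{ij})$ is symmetric tridiagonal (as produced by Aasen's algorithm). Then the growth factor satisfies $$\rho:=\frac{\max_{i,j}|t_{ij}|}{\max_{i,j}|a_{ij}|}\le 2^{n-1}.$$ Moreover, if $n\ge 6$, then this bound is not attained: $|t_{nn}|<2^{n-1}\max_{i,j}|a_{ij}|$, and hence $\rho<2^{n-1}$.
   Context: $e_1$ denotes the first column of the $n\times n$ identity matrix. The growth factor of the factorization is the ratio of the largest absolute entry of $T$ to the largest absolute entry of $A$. It is assumed $A\neq 0$. *)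

theory Defs
  imports "Jordan_Normal_Form.Matrix" "HOL-Combinatorics.Permutations"
begin

text \<open>Indices are 0-based: an n x n matrix has entries M $$ (i,j) with i, j < n.\<close>

definition symmetric_mat :: "real mat \<Rightarrow> bool" where
  "symmetric_mat M \<longleftrightarrow> M\<^sup>T = M"

definition permutation_mat :: "nat \<Rightarrow> real mat \<Rightarrow> bool" where
  "permutation_mat n P \<longleftrightarrow> (\<exists>\<sigma>. \<sigma> permutes {..<n} \<and>
      P = mat n n (\<lambda>(i,j). if j = \<sigma> i then 1 else 0))"

definition unit_lower_triangular :: "nat \<Rightarrow> real mat \<Rightarrow> bool" where
  "unit_lower_triangular n L \<longleftrightarrow> L \<in> carrier_mat n n \<and>
      (\<forall>i<n. L $$ (i,i) = 1) \<and> (\<forall>i<n. \<forall>j<n. i < j \<longrightarrow> L $$ (i,j) = 0)"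

definition tridiagonal :: "nat \<Rightarrow> real mat \<Rightarrow> bool" where
  "tridiagonal n T \<longleftrightarrow> T \<in> carrier_mat n n \<and>
      (\<forall>i<n. \<forall>j<n. i + 1 < j \<or> j + 1 < i \<longrightarrow> T $$ (i,j) = 0)"

definition max_abs_entry :: "nat \<Rightarrow> real mat \<Rightarrow> real" where
  "max_abs_entry n M = Max {\<bar>M $$ (i,j)\<bar> | i j. i < n \<and> j < n}"

definition growth_factor :: "nat \<Rightarrow> real mat \<Rightarrow> real mat \<Rightarrow> real" where
  "growth_factor n T A = max_abs_entry n T / max_abs_entry n A"

end

theory Submission
  imports Defs
begin

text \<open>Write B = P A P^T = L H with H = T L^T, indices counted from 0, and
alpha = max |a_ij|. Since L e_1 = e_1, row i >= 1 of H is row i of B minus a combination,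
with coefficients of modulus at most 1, of rows 1, ..., i - 1 of H; hence
|h_ij| <= 2^(i-1) alpha. The matrix H is upper Hessenberg and determines T through
t_(k,k-1) = h_(k,k-1) and t_kk = h_kk - l_(k,k-1) h_(k,k-1), which bounds every entry of T by
2^(n-1) alpha, strictly except possibly the last diagonal one. Equality there forces equality
in all these triangle inequalities for the last two columns of H: the multipliers become
products of signs, l_ik = -s_i s_k, and the entries of B in column n - 2 are +-alpha.
Feeding the zeros of H below its subdiagonal into the resulting doubling recurrence along
column n - 3 then gives |2 b_(n-4,n-3) +- b_(n-3,n-3)| = (2^(n-3) - 3) alpha, which exceeds
3 alpha as soon as n >= 6.\<close>

lemma sum_eq_single_nonzero:
  assumes "finite A" "a \<in> A" "\<And>x. x \<in> A \<Longrightarrow> x \<noteq> a \<Longrightarrow> g x = 0"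
  shows "sum g A = g a"
  using assms by (simp add: sum.remove sum.neutral)

lemma add_sum_pow2_pred_mult:
  fixes c :: real
  assumes "1 \<le> i"
  shows "c + (\<Sum>k\<in>{1..<i}. 2 ^ (k - 1) * c) = 2 ^ (i - 1) * c"
  using assms
proof (induction i rule: nat_induct_at_least)
  case (Suc m)
  then have "{1..<Suc m} = insert m {1..<m}" by auto
  with Suc show ?case by (cases m) (auto simp: algebra_simps)
qed simp

lemma sgn_mult_eq_bound_if_abs_add_sum_eq:
  fixes a c\<^sub>0 :: real and f c :: "'i \<Rightarrow> real"
  assumes K: "finite K" and a: "\<bar>a\<bar> \<le> c\<^sub>0" and f: "\<And>k. k \<in> K \<Longrightarrow> \<bar>f k\<bar> \<le> c k"
    and eq: "\<bar>a + sum f K\<bar> = c\<^sub>0 + sum c K"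
  shows "sgn (a + sum f K) * a = c\<^sub>0" and "\<And>k. k \<in> K \<Longrightarrow> sgn (a + sum f K) * f k = c k"
proof -
  define s where "s = sgn (a + sum f K)"
  have le: "s * y \<le> \<bar>y\<bar>" for y
    unfolding s_def sgn_if by auto
  have "(c\<^sub>0 - s * a) + (\<Sum>k\<in>K. c k - s * f k) = c\<^sub>0 + sum c K - s * (a + sum f K)"
    by (simp add: sum_subtractf sum_distrib_left algebra_simps)
  also have "\<dots> = 0"
    using eq by (simp add: s_def abs_sgn mult.commute)
  finally have sum0: "(c\<^sub>0 - s * a) + (\<Sum>k\<in>K. c k - s * f k) = 0" .
  have nonneg: "0 \<le> c k - s * f k" if "k \<in> K" for k
    using le[of "f k"] f[OF that] by linarith
  have "0 \<le> c\<^sub>0 - s * a" using le[of a] a by linarith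
  moreover have "0 \<le> (\<Sum>k\<in>K. c k - s * f k)" using nonneg by (rule sum_nonneg)
  ultimately have "c\<^sub>0 - s * a = 0" and terms0: "(\<Sum>k\<in>K. c k - s * f k) = 0"
    using sum0 by linarith+
  then show "s * a = c\<^sub>0" by simp
  show "s * f k = c k" if "k \<in> K" for k
    using terms0 nonneg that by (subst (asm) sum_nonneg_eq_0_iff[OF K]) auto
qed

text \<open>Here b is B = P A P^T = L T L^T, whose entries are bounded by alpha = max |a_ij|, and
h below is H = T L^T, so that B = L H.\<close>

locale aasen_factorization =
  fixes n :: nat and l t b :: "nat \<Rightarrow> nat \<Rightarrow> real" and \<alpha> :: real
  assumes l_diag: "\<And>i. i < n \<Longrightarrow> l i i = 1"
    and l_upper: "\<And>i j. i < j \<Longrightarrow> j < n \<Longrightarrow> l i j = 0"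
    and l_first_col: "\<And>i. 0 < i \<Longrightarrow> i < n \<Longrightarrow> l i 0 = 0"
    and l_bound: "\<And>i j. i < n \<Longrightarrow> j < n \<Longrightarrow> \<bar>l i j\<bar> \<le> 1"
    and t_tridiagonal: "\<And>i j. i < n \<Longrightarrow> j < n \<Longrightarrow> i + 1 < j \<or> j + 1 < i \<Longrightarrow> t i j = 0"
    and t_sym: "\<And>i j. i < n \<Longrightarrow> j < n \<Longrightarrow> t i j = t j i"
    and b_eq: "\<And>i j. i < n \<Longrightarrow> j < n \<Longrightarrow> b i j = (\<Sum>k<n. \<Sum>m<n. l i k * t k m * l j m)"
    and b_sym: "\<And>i j. i < n \<Longrightarrow> j < n \<Longrightarrow> b i j = b j i"
    and b_bound: "\<And>i j. i < n \<Longrightarrow> j < n \<Longrightarrow> \<bar>b i j\<bar> \<le> \<alpha>"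
    and alpha_pos: "0 < \<alpha>"
begin

definition h :: "nat \<Rightarrow> nat \<Rightarrow> real" where
  "h k j = (\<Sum>m<n. t k m * l j m)"

lemma b_eq_sum_l_h: "i < n \<Longrightarrow> j < n \<Longrightarrow> b i j = (\<Sum>k<n. l i k * h k j)"
  by (simp add: b_eq h_def sum_distrib_left mult.assoc)

lemma h_hessenberg: "k < n \<Longrightarrow> j + 2 \<le> k \<Longrightarrow> h k j = 0"
  unfolding h_def
proof (rule sum.neutral, rule ballI)
  fix m assume "k < n" "j + 2 \<le> k" "m \<in> {..<n}"
  then show "t k m * l j m = 0"
    by (cases "j < m") (simp_all add: l_upper t_tridiagonal)
qed

lemma h_subdiag:
  assumes "1 \<le> k" "k < n"
  shows "h k (k - 1) = t k (k - 1)"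
proof -
  have "t k m * l (k - 1) m = 0" if "m < n" "m \<noteq> k - 1" for m
  proof (cases "m < k - 1")
    case True
    then have "t k m = 0" using assms that by (intro t_tridiagonal) auto
    then show ?thesis by simp
  next
    case False
    then show ?thesis using that by (simp add: l_upper)
  qed
  then show ?thesis
    unfolding h_def using assms by (subst sum_eq_single_nonzero[where a = "k - 1"]) (auto simp: l_diag)
qed

lemma t_diag_eq: "1 \<le> k \<Longrightarrow> k < n \<Longrightarrow> t k k = h k k - l k (k - 1) * h k (k - 1)"
proof -
  assume k: "1 \<le> k" "k < n"
  have "h k k = (\<Sum>m\<in>{k - 1, k}. t k m * l k m)"
    unfolding h_def using k
    by (intro sum.mono_neutral_right) (auto simp: l_upper t_tridiagonal nat_neq_iff)
  also have "\<dots> = t k (k - 1) * l k (k - 1) + t k k"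
    using k by (simp add: l_diag)
  finally show ?thesis
    using h_subdiag[OF k] by simp
qed

lemma b_first_row: "j < n \<Longrightarrow> b 0 j = h 0 j"
  by (simp add: b_eq_sum_l_h, subst sum_eq_single_nonzero[where a = 0]) (auto simp: l_diag l_upper)

lemma t_00:
  assumes "0 < n"
  shows "t 0 0 = b 0 0"
  unfolding b_first_row[OF \<open>0 < n\<close>] h_def
  using assms by (subst sum_eq_single_nonzero[where a = 0]) (auto simp: l_diag l_upper)

lemma h_row_eq:
  assumes "1 \<le> i" "i < n" "j < n"
  shows "h i j = b i j - (\<Sum>k\<in>{1..<i}. l i k * h k j)"
proof -
  have "b i j = (\<Sum>k\<in>insert i {1..<i}. l i k * h k j)"
    unfolding b_eq_sum_l_h[OF assms(2,3)] using assms
    by (intro sum.mono_neutral_right) (auto simp: l_first_col l_upper not_le)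
  with assms show ?thesis
    by (simp add: l_diag)
qed

lemma abs_l_mult_le: "i < n \<Longrightarrow> k < n \<Longrightarrow> \<bar>l i k * x\<bar> \<le> \<bar>x\<bar>"
  using l_bound[of i k] by (simp add: abs_mult mult_left_le_one_le)

lemma h_bound: "1 \<le> i \<Longrightarrow> i < n \<Longrightarrow> j < n \<Longrightarrow> \<bar>h i j\<bar> \<le> 2 ^ (i - 1) * \<alpha>"
proof (induction i rule: less_induct)
  case (less i)
  have "\<bar>l i k * h k j\<bar> \<le> 2 ^ (k - 1) * \<alpha>" if "k \<in> {1..<i}" for k
    using abs_l_mult_le[of i k "h k j"] less.IH[of k] that less.prems by simp
  then have "\<bar>\<Sum>k\<in>{1..<i}. l i k * h k j\<bar> \<le> (\<Sum>k\<in>{1..<i}. 2 ^ (k - 1) * \<alpha>)"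
    by (intro order_trans[OF sum_abs sum_mono])
  then show ?case
    using h_row_eq[OF less.prems] b_bound[of i j] add_sum_pow2_pred_mult[OF less.prems(1), of \<alpha>]
      less.prems by linarith
qed

lemma t_subdiag_bound: "1 \<le> i \<Longrightarrow> i < n \<Longrightarrow> \<bar>t i (i - 1)\<bar> \<le> 2 ^ (i - 1) * \<alpha>"
  using h_bound[of i "i - 1"] h_subdiag[of i] by simp

lemma t_diag_bound:
  assumes "1 \<le> i" "i < n"
  shows "\<bar>t i i\<bar> \<le> 2 ^ i * \<alpha>"
proof -
  have "\<bar>t i i\<bar> \<le> \<bar>h i i\<bar> + \<bar>h i (i - 1)\<bar>"
    using t_diag_eq[OF assms] abs_l_mult_le[of i "i - 1" "h i (i - 1)"] assms by linarith
  also have "\<dots> \<le> 2 ^ (i - 1) * \<alpha> + 2 ^ (i - 1) * \<alpha>"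
    using h_bound[of i i] h_bound[of i "i - 1"] assms by (intro add_mono) auto
  also have "\<dots> = 2 ^ i * \<alpha>"
    using assms by (cases i) auto
  finally show ?thesis .
qed

lemma t_diag_extremal:
  assumes "1 \<le> i" "i < n" "2 ^ i * \<alpha> \<le> \<bar>t i i\<bar>"
  shows "\<bar>h i i\<bar> = 2 ^ (i - 1) * \<alpha>" and "\<bar>h i (i - 1)\<bar> = 2 ^ (i - 1) * \<alpha>"
proof -
  have "2 ^ i * \<alpha> = 2 ^ (i - 1) * \<alpha> + 2 ^ (i - 1) * (\<alpha>::real)"
    using assms by (cases i) auto
  moreover have "\<bar>t i i\<bar> \<le> \<bar>h i i\<bar> + \<bar>h i (i - 1)\<bar>"
    using t_diag_eq[OF assms(1,2)] abs_l_mult_le[of i "i - 1" "h i (i - 1)"] assms by linarith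
  moreover have "\<bar>h i i\<bar> \<le> 2 ^ (i - 1) * \<alpha>" "\<bar>h i (i - 1)\<bar> \<le> 2 ^ (i - 1) * \<alpha>"
    using h_bound[of i i] h_bound[of i "i - 1"] assms by auto
  ultimately show "\<bar>h i i\<bar> = 2 ^ (i - 1) * \<alpha>" and "\<bar>h i (i - 1)\<bar> = 2 ^ (i - 1) * \<alpha>"
    using assms(3) by linarith+
qed

lemma t_bound_below_last:
  assumes "i < n" "j < n" "\<not> (i = n - 1 \<and> j = n - 1)"
  shows "\<bar>t i j\<bar> < 2 ^ (n - 1) * \<alpha>"
proof -
  have pow_less: "2 ^ k * \<alpha> < 2 ^ (n - 1) * \<alpha>" if "k < n - 1" for k
    using alpha_pos that by (intro mult_strict_right_mono power_strict_increasing) auto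
  consider "i + 1 < j \<or> j + 1 < i" | "j = i + 1" | "i = j + 1" | "i = j \<and> i = 0" | "i = j \<and> 1 \<le> i"
    by linarith
  then show ?thesis
  proof cases
    case 1
    then show ?thesis using t_tridiagonal assms alpha_pos by simp
  next
    case 2
    then show ?thesis
      using t_sym[of i j] t_subdiag_bound[of j] pow_less[of i] assms by fastforce
  next
    case 3
    then show ?thesis using t_subdiag_bound[of i] pow_less[of j] assms by fastforce
  next
    case 4
    then show ?thesis using t_00 b_bound[of 0 0] pow_less[of 0] assms by fastforce
  next
    case 5
    then show ?thesis using t_diag_bound[of i] pow_less[of i] assms by fastforce
  qed
qed

lemma t_bound:
  assumes "i < n" "j < n"
  shows "\<bar>t i j\<bar> \<le> 2 ^ (n - 1) * \<alpha>"
proof (cases "i = n - 1 \<and> j = n - 1")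
  case True
  then show ?thesis
    using t_diag_bound[of "n - 1"] t_00 b_bound[of 0 0] assms by (cases "n = 1") auto
qed (use t_bound_below_last assms in fastforce)

lemma h_extremal:
  assumes i: "1 \<le> i" "i < n" and j: "j < n" and eq: "\<bar>h i j\<bar> = 2 ^ (i - 1) * \<alpha>"
  shows "b i j = sgn (h i j) * \<alpha>"
    and "\<And>k. k \<in> {1..<i} \<Longrightarrow> sgn (h i j) * (l i k * h k j) = - (2 ^ (k - 1) * \<alpha>)"
proof -
  let ?f = "\<lambda>k. - (l i k * h k j)" and ?c = "\<lambda>k. 2 ^ (k - 1) * \<alpha>"
  have h_sum: "h i j = b i j + sum ?f {1..<i}"
    using h_row_eq[OF i j] by (simp add: sum_negf)
  have f_bound: "\<bar>?f k\<bar> \<le> ?c k" if "k \<in> {1..<i}" for k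
    using abs_l_mult_le[of i k "h k j"] h_bound[of k j] that i j by fastforce
  have sum_eq: "\<bar>b i j + sum ?f {1..<i}\<bar> = \<alpha> + sum ?c {1..<i}"
    using eq add_sum_pow2_pred_mult[OF i(1), of \<alpha>] h_sum by simp
  have sgn_sq: "sgn (h i j) * sgn (h i j) = 1"
    using eq alpha_pos by auto
  have "sgn (h i j) * b i j = \<alpha>"
    using sgn_mult_eq_bound_if_abs_add_sum_eq(1)[OF _ b_bound[OF i(2) j] f_bound sum_eq] h_sum by simp
  then show "b i j = sgn (h i j) * \<alpha>"
    using sgn_sq by (metis mult.assoc mult_1)
  show "sgn (h i j) * (l i k * h k j) = - (2 ^ (k - 1) * \<alpha>)" if "k \<in> {1..<i}" for k
    using sgn_mult_eq_bound_if_abs_add_sum_eq(2)[OF _ b_bound[OF i(2) j] f_bound sum_eq that] h_sum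
    by simp
qed

lemma h_extremal_column:
  assumes i: "1 \<le> i" "i < n" and j: "j < n" and eq: "\<bar>h i j\<bar> = 2 ^ (i - 1) * \<alpha>"
    and k: "1 \<le> k" "k \<le> i"
  shows "\<bar>h k j\<bar> = 2 ^ (k - 1) * \<alpha>"
proof (cases "k = i")
  case False
  moreover have "\<bar>sgn (h i j)\<bar> = 1"
    using eq alpha_pos by auto
  ultimately have "\<bar>l i k * h k j\<bar> = 2 ^ (k - 1) * \<alpha>"
    using arg_cong[OF h_extremal(2)[OF i j eq, of k], of abs] k alpha_pos by (simp add: abs_mult)
  then show ?thesis
    using abs_l_mult_le[of i k "h k j"] h_bound[of k j] i j k by fastforce
qed (use eq in simp)

lemma l_extremal:
  assumes i: "1 \<le> i" "i < n" and j: "j < n" and eq: "\<bar>h i j\<bar> = 2 ^ (i - 1) * \<alpha>"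
    and k: "1 \<le> k" "k < i"
  shows "l i k = - (sgn (h i j) * sgn (h k j))"
proof -
  have eq_k: "\<bar>h k j\<bar> = 2 ^ (k - 1) * \<alpha>"
    using h_extremal_column[OF i j eq, of k] k by simp
  have "h k j = sgn (h k j) * (2 ^ (k - 1) * \<alpha>)"
    using sgn_mult_abs[of "h k j"] eq_k by simp
  then have "(sgn (h i j) * sgn (h k j) * l i k) * (2 ^ (k - 1) * \<alpha>) = - 1 * (2 ^ (k - 1) * \<alpha>)"
    using h_extremal(2)[OF i j eq, of k] k by (simp add: ac_simps)
  then have "sgn (h i j) * sgn (h k j) * l i k = - 1"
    using alpha_pos by (subst (asm) mult_right_cancel) auto
  then have "(sgn (h i j) * sgn (h i j)) * (sgn (h k j) * sgn (h k j)) * l i k = - (sgn (h i j) * sgn (h k j))"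
    by (metis (no_types, lifting) mult.assoc mult.left_commute mult_minus1_right)
  moreover have "h i j \<noteq> 0" "h k j \<noteq> 0"
    using eq eq_k alpha_pos by auto
  ultimately show ?thesis
    by simp
qed

end

text \<open>The situation forced by |h m (m - 1)| = 2^(m-1) alpha (lemmas h_extremal and l_extremal),
with s k = sgn (h k (m - 1)).\<close>

locale aasen_extremal_pattern = aasen_factorization +
  fixes s :: "nat \<Rightarrow> real" and m :: nat
  assumes m_less: "m < n"
    and s_abs: "\<And>k. 1 \<le> k \<Longrightarrow> k \<le> m \<Longrightarrow> \<bar>s k\<bar> = 1"
    and l_sign: "\<And>i k. 1 \<le> k \<Longrightarrow> k < i \<Longrightarrow> i \<le> m \<Longrightarrow> l i k = - (s i * s k)"
    and b_col: "\<And>k. 1 \<le> k \<Longrightarrow> k \<le> m \<Longrightarrow> b k (m - 1) = s k * \<alpha>"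
begin

lemma s_sq: "1 \<le> k \<Longrightarrow> k \<le> m \<Longrightarrow> s k * s k = 1"
  using s_abs[of k] abs_mult_self_eq[of "s k"] by simp

definition psum :: "nat \<Rightarrow> nat \<Rightarrow> real" where
  "psum i j = (\<Sum>k\<in>{1..<i}. s k * h k j)"

lemma s_mult_h_eq:
  assumes "1 \<le> i" "i \<le> m" "j < n"
  shows "s i * h i j = s i * b i j + psum i j"
proof -
  have "(\<Sum>k\<in>{1..<i}. l i k * h k j) = - s i * psum i j"
    unfolding psum_def sum_distrib_left by (rule sum.cong) (use assms in \<open>auto simp: l_sign\<close>)
  then have "h i j = b i j + s i * psum i j"
    using h_row_eq[of i j] assms m_less by simp
  then have "s i * h i j = s i * b i j + (s i * s i) * psum i j"
    by (simp add: algebra_simps)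
  then show ?thesis
    using s_sq[OF assms(1,2)] by simp
qed

lemma psum_Suc:
  assumes "1 \<le> i" "i \<le> m" "j < n"
  shows "psum (Suc i) j = 2 * psum i j + s i * b i j"
proof -
  have "{1..<Suc i} = insert i {1..<i}"
    using assms by auto
  then show ?thesis
    using s_mult_h_eq[OF assms] by (simp add: psum_def)
qed

lemma s_mult_b_below_subdiag:
  assumes "1 \<le> i" "i \<le> m" "j + 2 \<le> i"
  shows "s i * b i j = - psum i j"
  using s_mult_h_eq[of i j] h_hessenberg[of i j] assms m_less by simp

lemma psum_Suc_below_subdiag:
  assumes "1 \<le> i" "i \<le> m" "j + 2 \<le> i"
  shows "psum (Suc i) j = psum i j"
  using psum_Suc[of i j] s_mult_b_below_subdiag[OF assms] assms m_less by simp

lemma s_mult_b_col_m2: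
  assumes "5 \<le> m" "1 \<le> k" "k \<le> m - 4"
  shows "s k * b k (m - 2) = s (m - 1) * s (m - 2) * \<alpha>"
proof -
  have "s (m - 2) * b (m - 2) k = - psum (m - 2) k"
    using s_mult_b_below_subdiag[of "m - 2" k] assms by simp
  also have "\<dots> = - psum (m - 1) k"
    using psum_Suc_below_subdiag[of "m - 2" k] assms by (simp add: Suc_diff_Suc numeral_2_eq_2)
  also have "\<dots> = s (m - 1) * b (m - 1) k"
    using s_mult_b_below_subdiag[of "m - 1" k] assms by simp
  also have "\<dots> = s (m - 1) * s k * \<alpha>"
    using b_sym[of "m - 1" k] b_col[of k] assms m_less by simp
  finally have row_col: "s (m - 2) * b k (m - 2) = s (m - 1) * s k * \<alpha>"
    using b_sym[of "m - 2" k] assms m_less by simp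
  have "s k * b k (m - 2) = (s (m - 2) * s (m - 2)) * (s k * b k (m - 2))"
    using s_sq[of "m - 2"] assms by simp
  also have "\<dots> = s k * s (m - 2) * (s (m - 2) * b k (m - 2))"
    by (simp only: ac_simps)
  also have "\<dots> = (s k * s k) * (s (m - 1) * s (m - 2) * \<alpha>)"
    unfolding row_col by (simp only: ac_simps)
  also have "\<dots> = s (m - 1) * s (m - 2) * \<alpha>"
    using s_sq[of k] assms by simp
  finally show ?thesis .
qed

lemma psum_col_m2:
  assumes "5 \<le> m" "1 \<le> i" "i \<le> m - 3"
  shows "psum i (m - 2) = (2 ^ (i - 1) - 1) * (s (m - 1) * s (m - 2) * \<alpha>)"
  using assms(2,3)
proof (induction i rule: nat_induct_at_least)
  case (Suc i)
  have "psum (Suc i) (m - 2) = 2 * psum i (m - 2) + s i * b i (m - 2)"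
    using psum_Suc[of i "m - 2"] Suc m_less by simp
  also have "\<dots> = (2 ^ i - 1) * (s (m - 1) * s (m - 2) * \<alpha>)"
    using Suc s_mult_b_col_m2[OF assms(1), of i] by (cases i) (auto simp: algebra_simps)
  finally show ?case
    by simp
qed (simp add: psum_def)

lemma psum_m1_col_m2:
  assumes m: "5 \<le> m" and b_last: "s m * b m (m - 2) = s (m - 1) * s (m - 2) * \<alpha>"
  shows "psum (m - 1) (m - 2) = - (s (m - 1) * s (m - 2) * \<alpha>)"
proof -
  have "s (m - 1) * b (m - 1) (m - 2) = s (m - 1) * s (m - 2) * \<alpha>"
    using b_sym[of "m - 1" "m - 2"] b_col[of "m - 2"] m m_less by simp
  moreover have "s m * b m (m - 2) = - psum m (m - 2)"
    using s_mult_b_below_subdiag[of m "m - 2"] m by simp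
  moreover have "psum m (m - 2) = 2 * psum (m - 1) (m - 2) + s (m - 1) * b (m - 1) (m - 2)"
    using psum_Suc[of "m - 1" "m - 2"] m m_less by (simp add: Suc_diff_Suc)
  ultimately show ?thesis
    using b_last by linarith
qed

lemma extremal_pattern_absurd:
  assumes m: "5 \<le> m" and b_last: "s m * b m (m - 2) = s (m - 1) * s (m - 2) * \<alpha>"
  shows False
proof -
  define \<tau> where "\<tau> = s (m - 1) * s (m - 2)"
  define x where "x = s (m - 3) * b (m - 3) (m - 2)"
  define y where "y = s (m - 2) * b (m - 2) (m - 2)"
  have "psum (m - 1) (m - 2) = 4 * psum (m - 3) (m - 2) + 2 * x + y"
    using psum_Suc[of "m - 2" "m - 2"] psum_Suc[of "m - 3" "m - 2"] m m_less
    by (simp add: x_def y_def Suc_diff_Suc numeral_eq_Suc)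
  moreover have "psum (m - 3) (m - 2) = (2 ^ (m - 4) - 1) * (\<tau> * \<alpha>)"
    using psum_col_m2[of "m - 3"] m by (simp add: \<tau>_def numeral_eq_Suc)
  ultimately have "2 * x + y = - ((4 * 2 ^ (m - 4) - 3) * \<tau> * \<alpha>)"
    using psum_m1_col_m2[OF m b_last] by (simp add: \<tau>_def algebra_simps)
  moreover have "\<bar>\<tau>\<bar> = 1"
    using s_abs[of "m - 1"] s_abs[of "m - 2"] m by (simp add: \<tau>_def abs_mult)
  moreover have pow: "(2::real) \<le> 2 ^ (m - 4)"
    using m power_increasing[of 1 "m - 4" "2::real"] by simp
  ultimately have "(4 * 2 ^ (m - 4) - 3) * \<alpha> = \<bar>2 * x + y\<bar>"
    using alpha_pos by (simp add: abs_mult)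
  moreover have "\<bar>x\<bar> \<le> \<alpha>" "\<bar>y\<bar> \<le> \<alpha>"
    using b_bound[of "m - 3" "m - 2"] b_bound[of "m - 2" "m - 2"] s_abs[of "m - 3"] s_abs[of "m - 2"]
      m m_less by (auto simp: x_def y_def abs_mult)
  ultimately have "(4 * 2 ^ (m - 4) - 3) * \<alpha> \<le> 3 * \<alpha>"
    by linarith
  then have "4 * 2 ^ (m - 4) - 3 \<le> (3::real)"
    using alpha_pos by (simp only: mult_le_cancel_right_pos)
  with pow show False
    by linarith
qed

end

context aasen_factorization
begin

lemma t_last_diag_strict:
  assumes "6 \<le> n"
  shows "\<bar>t (n - 1) (n - 1)\<bar> < 2 ^ (n - 1) * \<alpha>"
proof (rule ccontr)
  define N where "N = n - 1"
  have N: "5 \<le> N" "N < n"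
    using assms by (auto simp: N_def)
  assume "\<not> ?thesis"
  then have "2 ^ N * \<alpha> \<le> \<bar>t N N\<bar>"
    by (simp add: N_def)
  then have ext: "\<bar>h N N\<bar> = 2 ^ (N - 1) * \<alpha>" "\<bar>h N (N - 1)\<bar> = 2 ^ (N - 1) * \<alpha>"
    using t_diag_extremal[of N] N by auto
  have col: "\<bar>h k j\<bar> = 2 ^ (k - 1) * \<alpha>" if "j \<in> {N - 1, N}" "1 \<le> k" "k \<le> N" for j k
    using h_extremal_column[of N j k] ext that N by auto
  define s where "s k = sgn (h k (N - 1))" for k
  define s' where "s' k = sgn (h k N)" for k
  have b_ext: "b k j = sgn (h k j) * \<alpha>" if "j \<in> {N - 1, N}" "1 \<le> k" "k \<le> N" for j k
    using h_extremal(1)[of k j] col[OF that] that N by auto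
  have l_ext: "l i k = - (sgn (h i j) * sgn (h k j))"
    if "j \<in> {N - 1, N}" "1 \<le> k" "k < i" "i \<le> N" for i j k
    using l_extremal[of i j k] col[of j i] that N by auto
  interpret aasen_extremal_pattern n l t b \<alpha> s N
  proof
    show "\<bar>s k\<bar> = 1" if "1 \<le> k" "k \<le> N" for k
      using col[of "N - 1" k] that alpha_pos by (auto simp: s_def)
  qed (use N b_ext l_ext in \<open>auto simp: s_def\<close>)
  have "s N = s' (N - 1)"
    using b_ext[of "N - 1" N] b_ext[of N "N - 1"] b_sym[of N "N - 1"] N alpha_pos
    by (simp add: s_def s'_def)
  moreover have "s' (N - 1) * s' (N - 2) = s (N - 1) * s (N - 2)"
    using l_ext[of "N - 1" "N - 2" "N - 1"] l_ext[of N "N - 2" "N - 1"] N by (simp add: s_def s'_def)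
  moreover have "b N (N - 2) = s' (N - 2) * \<alpha>"
    using b_ext[of N "N - 2"] b_sym[of N "N - 2"] N by (simp add: s'_def)
  \<comment> \<open>via the symmetry of B, column N supplies the entry b N (N - 2) with the sign needed\<close>
  ultimately have "s N * b N (N - 2) = s (N - 1) * s (N - 2) * \<alpha>"
    by simp
  then show False
    using extremal_pattern_absurd N(1) by blast
qed

end

lemma finite_abs_entries: "finite {\<bar>M $$ (i, j)\<bar> | i j. i < n \<and> j < n}"
proof (rule finite_subset)
  show "{\<bar>M $$ (i, j)\<bar> | i j. i < n \<and> j < n} \<subseteq> (\<lambda>(i, j). \<bar>M $$ (i, j)\<bar>) ` ({..<n} \<times> {..<n})"
    by auto
qed auto

lemma abs_entry_le_max_abs_entry: "i < n \<Longrightarrow> j < n \<Longrightarrow> \<bar>M $$ (i, j)\<bar> \<le> max_abs_entry n M"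
  unfolding max_abs_entry_def by (rule Max_ge[OF finite_abs_entries]) auto

lemma max_abs_entry_le_iff:
  "0 < n \<Longrightarrow> max_abs_entry n M \<le> c \<longleftrightarrow> (\<forall>i<n. \<forall>j<n. \<bar>M $$ (i, j)\<bar> \<le> c)"
  unfolding max_abs_entry_def by (subst Max_le_iff[OF finite_abs_entries]) auto

lemma max_abs_entry_less_iff:
  "0 < n \<Longrightarrow> max_abs_entry n M < c \<longleftrightarrow> (\<forall>i<n. \<forall>j<n. \<bar>M $$ (i, j)\<bar> < c)"
  unfolding max_abs_entry_def by (subst Max_less_iff[OF finite_abs_entries]) auto

lemma max_abs_entry_pos:
  assumes "A \<in> carrier_mat n n" "A \<noteq> 0\<^sub>m n n"
  shows "0 < max_abs_entry n A"
proof -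
  obtain i j where "i < n" "j < n" "A $$ (i, j) \<noteq> 0"
    using assms by (metis eq_matI index_zero_mat(1) carrier_matD zero_carrier_mat)
  then show ?thesis
    using abs_entry_le_max_abs_entry[of i n j A] by linarith
qed

lemma permutation_mat_conj_index:
  fixes A :: "real mat"
  assumes "\<sigma> permutes {..<n}" "A \<in> carrier_mat n n" "i < n" "j < n"
  defines "P \<equiv> mat n n (\<lambda>(i, j). if j = \<sigma> i then 1 else 0)"
  shows "(P * A * P\<^sup>T) $$ (i, j) = A $$ (\<sigma> i, \<sigma> j)"
proof -
  have \<sigma>: "\<sigma> i < n" "\<sigma> j < n"
    using permutes_in_image[OF assms(1)] assms(3,4) by auto
  have "(P * A) $$ (i, k) = A $$ (\<sigma> i, k)" if "k < n" for k
    using assms(2,3) that \<sigma> by (simp add: P_def scalar_prod_def sum_eq_single_nonzero[where a = "\<sigma> i"])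
  then show ?thesis
    using assms(2,3,4) \<sigma> by (simp add: P_def scalar_prod_def sum_eq_single_nonzero[where a = "\<sigma> j"])
qed

lemma mult_mult_transpose_index:
  fixes L T :: "real mat"
  assumes "L \<in> carrier_mat n n" "T \<in> carrier_mat n n" "i < n" "j < n"
  shows "(L * T * L\<^sup>T) $$ (i, j) = (\<Sum>k<n. \<Sum>m<n. L $$ (i, k) * T $$ (k, m) * L $$ (j, m))"
  using assms by (simp add: scalar_prod_def sum_distrib_left mult.assoc atLeast0LessThan)

lemma aasen_factorization_of_mat:
  fixes A P L T :: "real mat"
  assumes A: "A \<in> carrier_mat n n" "symmetric_mat A" "A \<noteq> 0\<^sub>m n n"
    and P: "permutation_mat n P"
    and L: "unit_lower_triangular n L"
    and L_e1: "\<forall>i<n. i \<noteq> 0 \<longrightarrow> L $$ (i, 0) = 0"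
    and L_bd: "\<forall>i<n. \<forall>j<n. \<bar>L $$ (i, j)\<bar> \<le> 1"
    and T: "tridiagonal n T" "symmetric_mat T"
    and fact: "P * A * P\<^sup>T = L * T * L\<^sup>T"
  shows "aasen_factorization n (\<lambda>i j. L $$ (i, j)) (\<lambda>i j. T $$ (i, j))
           (\<lambda>i j. (P * A * P\<^sup>T) $$ (i, j)) (max_abs_entry n A)"
proof -
  obtain \<sigma> where \<sigma>: "\<sigma> permutes {..<n}" and P_eq: "P = mat n n (\<lambda>(i, j). if j = \<sigma> i then 1 else 0)"
    using P unfolding permutation_mat_def by blast
  have \<sigma>_less: "\<sigma> i < n" if "i < n" for i
    using permutes_in_image[OF \<sigma>] that by simp
  have B_index: "(P * A * P\<^sup>T) $$ (i, j) = A $$ (\<sigma> i, \<sigma> j)" if "i < n" "j < n" for i j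
    unfolding P_eq using permutation_mat_conj_index[OF \<sigma> A(1) that] .
  have L_carrier: "L \<in> carrier_mat n n" and T_carrier: "T \<in> carrier_mat n n"
    using L T(1) by (auto simp: unit_lower_triangular_def tridiagonal_def)
  have sym_index: "M $$ (i, j) = M $$ (j, i)" if "symmetric_mat M" "M \<in> carrier_mat n n" "i < n" "j < n"
    for M :: "real mat" and i j
    using that by (metis carrier_matD index_transpose_mat(1) symmetric_mat_def)
  show ?thesis
  proof
    show "(P * A * P\<^sup>T) $$ (i, j) = (\<Sum>k<n. \<Sum>m<n. L $$ (i, k) * T $$ (k, m) * L $$ (j, m))"
      if "i < n" "j < n" for i j
      unfolding fact using mult_mult_transpose_index[OF L_carrier T_carrier that] .
    show "(P * A * P\<^sup>T) $$ (i, j) = (P * A * P\<^sup>T) $$ (j, i)" if "i < n" "j < n" for i j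
      using B_index sym_index[OF A(2,1)] \<sigma>_less that by simp
    show "\<bar>(P * A * P\<^sup>T) $$ (i, j)\<bar> \<le> max_abs_entry n A" if "i < n" "j < n" for i j
      using B_index abs_entry_le_max_abs_entry \<sigma>_less that by simp
  qed (use L L_e1 L_bd T sym_index[OF T(2) T_carrier] max_abs_entry_pos[OF A(1,3)] in
        \<open>auto simp: unit_lower_triangular_def tridiagonal_def\<close>)
qed

theorem theorem1:
  fixes n :: nat and A P L T :: "real mat"
  assumes n3: "n \<ge> 3"
    and A: "A \<in> carrier_mat n n" "symmetric_mat A" "A \<noteq> 0\<^sub>m n n"
    and P: "permutation_mat n P"
    and L: "unit_lower_triangular n L"
    and L_e1: "\<forall>i<n. i \<noteq> 0 \<longrightarrow> L $$ (i,0) = 0"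
    and L_bd: "\<forall>i<n. \<forall>j<n. \<bar>L $$ (i,j)\<bar> \<le> 1"
    and T: "tridiagonal n T" "symmetric_mat T"
    and fact: "P * A * P\<^sup>T = L * T * L\<^sup>T"
  shows "growth_factor n T A \<le> 2 ^ (n - 1)
         \<and> (n \<ge> 6 \<longrightarrow>
              \<bar>T $$ (n - 1, n - 1)\<bar> < 2 ^ (n - 1) * max_abs_entry n A
              \<and> growth_factor n T A < 2 ^ (n - 1))"
proof -
  define \<alpha> where "\<alpha> = max_abs_entry n A"
  interpret aasen_factorization n "\<lambda>i j. L $$ (i, j)" "\<lambda>i j. T $$ (i, j)"
    "\<lambda>i j. (P * A * P\<^sup>T) $$ (i, j)" \<alpha>
    unfolding \<alpha>_def by (rule aasen_factorization_of_mat[OF A P L L_e1 L_bd T fact])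
  have n: "0 < n"
    using n3 by simp
  have "max_abs_entry n T \<le> 2 ^ (n - 1) * \<alpha>"
    using t_bound by (simp add: max_abs_entry_le_iff[OF n])
  then have "growth_factor n T A \<le> 2 ^ (n - 1)"
    using alpha_pos by (simp add: growth_factor_def \<alpha>_def[symmetric] pos_divide_le_eq)
  moreover have "\<bar>T $$ (n - 1, n - 1)\<bar> < 2 ^ (n - 1) * \<alpha> \<and> growth_factor n T A < 2 ^ (n - 1)"
    if "6 \<le> n"
  proof -
    have "max_abs_entry n T < 2 ^ (n - 1) * \<alpha>"
      using t_bound_below_last t_last_diag_strict[OF that] by (auto simp: max_abs_entry_less_iff[OF n])
    then show ?thesis
      using t_last_diag_strict[OF that] alpha_pos
      by (simp add: growth_factor_def \<alpha>_def[symmetric] pos_divide_less_eq)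
  qed
  ultimately show ?thesis
    by (simp add: \<alpha>_def)
qed

end
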